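(* Let $n>0$ be an integer and let $(\xi_k)_{k\geq 0}$ be a sequence of positive real numbers. Suppose there exist $k_0>0$ and real numbers $A_1,A_2>0$, $\alpha>\beta>0$ and $\epsilon>0$ such that $$\xi_1\leq \exp\Big(-\alpha\sum_{i=1}^n\frac{1}{k_0+i}\Big)\xi_0+A_1$$ and, for every integer $k\geq1$, $$\xi_{k+1}\leq \exp\Big(-\alpha\sum_{i=1}^n\frac{1}{k_0+nk+i}+\frac{\epsilon}{k^2}\Big)\xi_k+\frac{A_2}{(k_0+n(k+1))^{\beta+1}}.$$ Then, with $c:=e^{\epsilon\pi^2/6}$, for every $K\geq1$, $$\xi_K\leq \frac{c(k_0+1)^\alpha}{(k_0+nK)^\alpha}\xi_0+\frac{c(k_0+n+1)^\alpha A_1}{(k_0+nK)^\alpha}+\frac{\frac{c}{\alpha-\beta}e^{\frac{\alpha}{k_0+n+1}}A_2}{n(k_0+nK)^\beta}+\frac{c\,e^{\frac{\alpha}{k_0+n+1}}A_2}{(k_0+nK)^{\beta+1}}.$$ *)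

theory Defs
  imports "HOL-Analysis.Analysis"
begin

end

theory Submission
  imports Defs
begin

(* With N_k = k0 + n k and w_k = (N_k + 1)^alpha, the estimate
   sum_{i=1..n} 1/(a+i) >= ln ((a+n+1)/(a+1)) bounds each contraction factor by w_k / w_(k+1).
   Hence w_k xi_k grows only through the factors exp (eps/k^2), whose product is at most c, and
   through the weighted perturbations; unrolling bounds xi_K by c / w_K times
   w_0 xi_0 + w_1 A1 + sum_{m>=2} w_m A2 / N_m^(beta+1). For m >= 2 we have
   w_m <= exp (alpha/(k0+n+1)) N_m^alpha, and the remaining sum of N_m^(alpha-beta-1) is compared
   with the integral of x^(alpha-beta-1) through the mean value theorem. *)

lemma sum_inverse_squares_le: "(\<Sum>j<K. 1 / (real j)^2) \<le> pi^2 / 6"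
proof -
  \<comment> \<open>the term \<open>j = 0\<close> is \<open>1 / 0 = 0\<close>\<close>
  have "(\<lambda>j. 1 / (real j)^2) sums (pi^2 / 6)"
    using sums_Suc_iff[of "\<lambda>j. 1 / (real j)^2"] inverse_squares_sums by (simp add: add.commute)
  then show ?thesis
    by (metis sums_unique sums_summable sum_le_suminf finite_lessThan zero_le_divide_1_iff zero_le_power2)
qed

lemma powr_diff_ge_convex:
  fixes x y g :: real
  assumes "0 < y" "y \<le> x" "g \<ge> 1"
  shows "g * y powr (g - 1) * (x - y) \<le> x powr g - y powr g"
proof (cases "y = x")
  case False
  then have "y < x" using assms by simp
  then obtain z where z: "y < z" "z < x" "x powr g - y powr g = (x - y) * (g * z powr (g - 1))"
    by (rule MVT2[THEN exE]) (use assms in \<open>auto intro!: has_real_derivative_powr\<close>)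
  have "y powr (g - 1) \<le> z powr (g - 1)" using z assms by (intro powr_mono2) auto
  then show ?thesis using z assms by (simp add: mult_left_mono mult.commute mult.left_commute)
qed simp

lemma powr_diff_ge_concave:
  fixes x y g :: real
  assumes "0 < y" "y \<le> x" "0 < g" "g \<le> 1"
  shows "g * x powr (g - 1) * (x - y) \<le> x powr g - y powr g"
proof (cases "y = x")
  case False
  then have "y < x" using assms by simp
  then obtain z where z: "y < z" "z < x" "x powr g - y powr g = (x - y) * (g * z powr (g - 1))"
    by (rule MVT2[THEN exE]) (use assms in \<open>auto intro!: has_real_derivative_powr\<close>)
  have "x powr (g - 1) \<le> z powr (g - 1)" using z assms by (intro powr_mono2') auto
  then show ?thesis using z assms by (simp add: mult_left_mono mult.commute mult.left_commute)
qed simp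

lemma powr_add_one_le_exp:
  fixes x a :: real
  assumes "x > 0" "a \<ge> 0"
  shows "(x + 1) powr a \<le> exp (a / x) * x powr a"
proof -
  have "x + 1 = x * (1 + 1 / x)"
    using assms by (simp add: field_simps)
  then have "(x + 1) powr a = x powr a * (1 + 1 / x) powr a"
    using assms by (simp add: powr_mult)
  also have "(1 + 1 / x) powr a = exp (a * ln (1 + 1 / x))"
    using assms by (simp add: powr_def add_pos_pos less_imp_neq[symmetric])
  also have "\<dots> \<le> exp (a / x)"
    using assms mult_left_mono[OF ln_add_one_self_le_self[of "1 / x"], of a] by simp
  finally show ?thesis using assms by (simp add: mult.commute mult_left_mono)
qed

lemma sum_powr_arith_progression_le:
  fixes a h g :: real
  assumes a: "a > 0" and h: "h > 0" and g: "g > 0"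
  shows "(\<Sum>m=1..K. (a + h * real m) powr (g - 1))
           \<le> (a + h * real K) powr g / (h * g) + (a + h * real K) powr (g - 1)"
proof -
  define N where "N m = a + h * real m" for m
  have N_pos: "N m > 0" for m unfolding N_def using a h by (simp add: add_pos_nonneg)
  have N_Suc: "N (Suc m) = N m + h" for m unfolding N_def by (simp add: algebra_simps)
  have "(\<Sum>m=1..K. N m powr (g - 1)) \<le> N K powr g / (h * g) + N K powr (g - 1)"
  proof (cases "g \<ge> 1")
    case True
    show ?thesis
    proof (induction K)
      case (Suc K)
      have "g * N K powr (g - 1) * h \<le> N (Suc K) powr g - N K powr g"
        using powr_diff_ge_convex[of "N K" "N (Suc K)" g] N_pos True h by (simp add: N_Suc)
      then have "N K powr (g - 1) \<le> (N (Suc K) powr g - N K powr g) / (h * g)"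
        using h g by (simp add: field_simps)
      then show ?case using Suc.IH by (simp add: diff_divide_distrib)
    qed (use N_pos h g in simp)
  next
    case False
    have "(\<Sum>m=1..K. N m powr (g - 1)) \<le> N K powr g / (h * g)"
    proof (induction K)
      case (Suc K)
      have "g * N (Suc K) powr (g - 1) * h \<le> N (Suc K) powr g - N K powr g"
        using powr_diff_ge_concave[of "N K" "N (Suc K)" g] N_pos False g h by (simp add: N_Suc)
      then have "N (Suc K) powr (g - 1) \<le> (N (Suc K) powr g - N K powr g) / (h * g)"
        using h g by (simp add: field_simps)
      then show ?case using Suc.IH by (simp add: diff_divide_distrib)
    qed (use N_pos h g in simp)
    then show ?thesis by (smt (verit) powr_ge_zero)
  qed
  then show ?thesis unfolding N_def .
qed

lemma ln_ratio_le_sum_inverse: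
  fixes a :: real
  assumes "a \<ge> 0"
  shows "ln ((a + real n + 1) / (a + 1)) \<le> (\<Sum>i=1..n. 1 / (a + real i))"
proof (induction n)
  case (Suc n)
  have "ln ((a + real (Suc n) + 1) / (a + 1))
      = ln ((a + real n + 1) / (a + 1)) + ln (1 + 1 / (a + real n + 1))"
    using assms by (simp add: ln_div field_simps)
  also have "ln (1 + 1 / (a + real n + 1)) \<le> 1 / (a + real n + 1)"
    using assms by (intro ln_add_one_self_le_self) simp
  finally show ?case using Suc.IH by (simp add: add_ac)
qed simp

lemma exp_neg_sum_inverse_le_powr:
  fixes a \<alpha> :: real
  assumes "a \<ge> 0" "\<alpha> \<ge> 0"
  shows "exp (- \<alpha> * (\<Sum>i=1..n. 1 / (a + real i))) \<le> ((a + 1) / (a + real n + 1)) powr \<alpha>"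
proof -
  have "exp (- \<alpha> * (\<Sum>i=1..n. 1 / (a + real i))) \<le> exp (\<alpha> * - ln ((a + real n + 1) / (a + 1)))"
    using ln_ratio_le_sum_inverse[OF assms(1), of n] assms(2) by (simp add: mult_left_mono)
  also have "\<dots> = ((a + 1) / (a + real n + 1)) powr \<alpha>"
    using assms by (simp add: powr_def ln_div)
  finally show ?thesis .
qed

lemma linear_recursive_ineq_unroll:
  fixes x w d b :: "nat \<Rightarrow> real"
  assumes w: "\<And>k. w k > 0" and d: "\<And>k. d k \<ge> 1" and b: "\<And>k. b k \<ge> 0"
    and rec: "\<And>k. x (Suc k) \<le> w k / w (Suc k) * d k * x k + b (Suc k)"
  shows "x K \<le> (\<Prod>j<K. d j) * (w 0 * x 0 + (\<Sum>m=1..K. w m * b m)) / w K"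
proof (induction K)
  case 0
  show ?case using w[of 0] by simp
next
  case (Suc K)
  define P where "P = (\<Prod>j<K. d j)"
  define R where "R = w 0 * x 0 + (\<Sum>m=1..K. w m * b m)"
  have "P \<ge> 1" unfolding P_def using d by (simp add: prod_ge_1)
  then have dP: "d K * P \<ge> 1" using mult_mono[OF d[of K], of 1 P] d[of K] by simp
  have coef: "w K / w (Suc K) * d K \<ge> 0" using w[of K] w[of "Suc K"] d[of K] by simp
  have "x (Suc K) \<le> w K / w (Suc K) * d K * (P * R / w K) + b (Suc K)"
    using rec[of K] mult_left_mono[OF Suc.IH coef] unfolding P_def R_def by linarith
  also have "\<dots> = d K * P * R / w (Suc K) + b (Suc K)"
    using w[of K] by (simp add: field_simps)
  also have "\<dots> \<le> d K * P * R / w (Suc K) + d K * P * b (Suc K)"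
    using mult_right_mono[OF dP b[of "Suc K"]] by simp
  also have "\<dots> = d K * P * (R + w (Suc K) * b (Suc K)) / w (Suc K)"
    using w[of "Suc K"] by (simp add: field_simps)
  finally show ?case unfolding P_def R_def by (simp add: ac_simps)
qed

text \<open>At \<open>k = 0\<close> the term \<open>\<epsilon> / k\<^sup>2\<close> vanishes (division by zero is \<open>0\<close>), so the
  hypothesis at \<open>k = 0\<close> is a plain contraction step.\<close>

lemma harmonic_recursion_unroll:
  fixes x b :: "nat \<Rightarrow> real" and a \<alpha> \<epsilon> :: real
  assumes a: "a \<ge> 0" and \<alpha>: "\<alpha> \<ge> 0" and \<epsilon>: "\<epsilon> \<ge> 0"
    and x: "\<And>k. x k \<ge> 0" and b: "\<And>k. b k \<ge> 0"
    and step: "\<And>k. x (Suc k) \<le>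
      exp (- \<alpha> * (\<Sum>i=1..n. 1 / (a + real n * real k + real i)) + \<epsilon> / (real k)^2) * x k + b (Suc k)"
  shows "x K \<le> exp (\<epsilon> * pi^2 / 6)
      * ((a + 1) powr \<alpha> * x 0 + (\<Sum>m=1..K. (a + real n * real m + 1) powr \<alpha> * b m))
      / (a + real n * real K + 1) powr \<alpha>"
proof -
  define w where "w m = (a + real n * real m + 1) powr \<alpha>" for m
  have w_pos: "w m > 0" for m
  proof -
    have "a + real n * real m + 1 > 0" using a mult_nonneg_nonneg[of "real n" "real m"] by linarith
    then show ?thesis unfolding w_def by simp
  qed
  have "x K \<le> (\<Prod>j<K. exp (\<epsilon> / (real j)^2)) * (w 0 * x 0 + (\<Sum>m=1..K. w m * b m)) / w K"
  proof (rule linear_recursive_ineq_unroll[OF w_pos _ b])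
    fix k
    define S where "S = (\<Sum>i=1..n. 1 / (a + real n * real k + real i))"
    have "exp (- \<alpha> * S) \<le> w k / w (Suc k)"
      using exp_neg_sum_inverse_le_powr[of "a + real n * real k" \<alpha> n] a \<alpha>
      unfolding S_def w_def by (simp add: powr_divide algebra_simps)
    then have "exp (- \<alpha> * S) * (exp (\<epsilon> / (real k)^2) * x k) \<le> w k / w (Suc k) * (exp (\<epsilon> / (real k)^2) * x k)"
      using x[of k] by (intro mult_right_mono) auto
    then show "x (Suc k) \<le> w k / w (Suc k) * exp (\<epsilon> / (real k)^2) * x k + b (Suc k)"
      using step[of k] unfolding S_def exp_add by (simp add: mult.assoc)
  qed (use \<epsilon> in simp)
  also have "\<dots> \<le> exp (\<epsilon> * pi^2 / 6) * (w 0 * x 0 + (\<Sum>m=1..K. w m * b m)) / w K"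
  proof -
    have "(\<Prod>j<K. exp (\<epsilon> / (real j)^2)) = exp (\<epsilon> * (\<Sum>j<K. 1 / (real j)^2))"
      by (simp add: exp_sum sum_distrib_left)
    also have "\<dots> \<le> exp (\<epsilon> * pi^2 / 6)"
      using mult_left_mono[OF sum_inverse_squares_le[of K] \<epsilon>] by simp
    finally show ?thesis
      using w_pos x[of 0] b
      by (intro divide_right_mono mult_right_mono add_nonneg_nonneg sum_nonneg mult_nonneg_nonneg)
        (auto intro: less_imp_le)
  qed
  finally show ?thesis unfolding w_def by simp
qed

lemma sum_shifted_powr_div_powr_le:
  fixes a h \<alpha> \<beta> :: real
  assumes a: "a > 0" and h: "h \<ge> 1" and \<alpha>: "\<alpha> \<ge> 0" and \<beta>\<alpha>: "\<beta> < \<alpha>"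
  shows "(\<Sum>m=2..K. (a + h * real m + 1) powr \<alpha> / (a + h * real m) powr (\<beta> + 1))
      \<le> exp (\<alpha> / (a + h + 1))
         * ((a + h * real K) powr (\<alpha> - \<beta>) / (h * (\<alpha> - \<beta>)) + (a + h * real K) powr (\<alpha> - \<beta> - 1))"
proof -
  define N where "N m = a + h * real m" for m
  have N_pos: "N m > 0" for m unfolding N_def using a h by (simp add: add_pos_nonneg)
  have term_le: "(N m + 1) powr \<alpha> / N m powr (\<beta> + 1) \<le> exp (\<alpha> / (a + h + 1)) * N m powr (\<alpha> - \<beta> - 1)"
    if "m \<ge> 2" for m
  proof -
    have "h * 2 \<le> h * real m" using that h by simp
    then have "a + h + 1 \<le> N m" using h unfolding N_def by linarith
    then have "\<alpha> / N m \<le> \<alpha> / (a + h + 1)"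
      using \<alpha> a h N_pos[of m] by (intro divide_left_mono mult_pos_pos) auto
    then have "(N m + 1) powr \<alpha> \<le> exp (\<alpha> / (a + h + 1)) * N m powr \<alpha>"
      using powr_add_one_le_exp[OF N_pos[of m] \<alpha>]
      by (smt (verit) mult_right_mono powr_ge_zero exp_le_cancel_iff)
    then have "(N m + 1) powr \<alpha> / N m powr (\<beta> + 1) \<le> exp (\<alpha> / (a + h + 1)) * (N m powr \<alpha> / N m powr (\<beta> + 1))"
      by (simp add: divide_right_mono)
    also have "N m powr \<alpha> / N m powr (\<beta> + 1) = N m powr (\<alpha> - \<beta> - 1)"
      by (simp add: powr_diff[symmetric] algebra_simps)
    finally show ?thesis .
  qed
  have "(\<Sum>m=2..K. (N m + 1) powr \<alpha> / N m powr (\<beta> + 1)) \<le> exp (\<alpha> / (a + h + 1)) * (\<Sum>m=2..K. N m powr (\<alpha> - \<beta> - 1))"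
    unfolding sum_distrib_left using term_le by (intro sum_mono) auto
  also have "(\<Sum>m=2..K. N m powr (\<alpha> - \<beta> - 1)) \<le> (\<Sum>m=1..K. N m powr (\<alpha> - \<beta> - 1))"
    by (rule sum_mono2) auto
  also have "\<dots> \<le> N K powr (\<alpha> - \<beta>) / (h * (\<alpha> - \<beta>)) + N K powr (\<alpha> - \<beta> - 1)"
    using sum_powr_arith_progression_le[OF a _, of h "\<alpha> - \<beta>"] h \<beta>\<alpha> unfolding N_def by simp
  finally show ?thesis unfolding N_def by (simp add: mult_left_mono)
qed

theorem lemma2:
  fixes n :: nat and \<xi> :: "nat \<Rightarrow> real"
    and k0 A1 A2 \<alpha> \<beta> \<epsilon> :: real
  assumes n_pos: "n > 0"
    and \<xi>_pos: "\<And>k. \<xi> k > 0"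
    and k0_pos: "k0 > 0"
    and A1_pos: "A1 > 0" and A2_pos: "A2 > 0"
    and \<beta>_pos: "\<beta> > 0" and \<alpha>\<beta>: "\<alpha> > \<beta>"
    and \<epsilon>_pos: "\<epsilon> > 0"
    and first: "\<xi> 1 \<le> exp (- \<alpha> * (\<Sum>i=1..n. 1 / (k0 + real i))) * \<xi> 0 + A1"
    and step: "\<And>k. k \<ge> 1 \<Longrightarrow>
        \<xi> (k + 1) \<le> exp (- \<alpha> * (\<Sum>i=1..n. 1 / (k0 + real n * real k + real i))
                         + \<epsilon> / (real k)^2) * \<xi> k
                   + A2 / (k0 + real n * (real k + 1)) powr (\<beta> + 1)"
    and K: "K \<ge> 1"
  shows "let c = exp (\<epsilon> * pi^2 / 6) in
    \<xi> K \<le> c * (k0 + 1) powr \<alpha> / (k0 + real n * real K) powr \<alpha> * \<xi> 0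
          + c * (k0 + real n + 1) powr \<alpha> * A1 / (k0 + real n * real K) powr \<alpha>
          + (c / (\<alpha> - \<beta>) * exp (\<alpha> / (k0 + real n + 1)) * A2)
              / (real n * (k0 + real n * real K) powr \<beta>)
          + c * exp (\<alpha> / (k0 + real n + 1)) * A2 / (k0 + real n * real K) powr (\<beta> + 1)"
proof -
  define c where "c = exp (\<epsilon> * pi^2 / 6)"
  define E where "E = exp (\<alpha> / (k0 + real n + 1))"
  define N where "N m = k0 + real n * real m" for m
  define b where "b m = (if m = 1 then A1 else A2 / N m powr (\<beta> + 1))" for m
  define T where "T = (\<Sum>m=2..K. (N m + 1) powr \<alpha> / N m powr (\<beta> + 1))"
  define B where "B = E * (N K powr (\<alpha> - \<beta>) / (real n * (\<alpha> - \<beta>)) + N K powr (\<alpha> - \<beta> - 1))"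
  have \<alpha>_pos: "\<alpha> > 0" using \<alpha>\<beta> \<beta>_pos by simp
  have N_pos: "N m > 0" for m unfolding N_def using k0_pos by (simp add: add_pos_nonneg)
  have T_le: "T \<le> B"
    using sum_shifted_powr_div_powr_le[of k0 "real n" \<alpha> \<beta> K] k0_pos n_pos \<alpha>_pos \<alpha>\<beta>
    unfolding T_def B_def E_def N_def by simp
  have "\<xi> K \<le> c * ((k0 + 1) powr \<alpha> * \<xi> 0 + (\<Sum>m=1..K. (N m + 1) powr \<alpha> * b m)) / (N K + 1) powr \<alpha>"
    unfolding c_def N_def
  proof (rule harmonic_recursion_unroll)
    show "\<xi> (Suc k) \<le> exp (- \<alpha> * (\<Sum>i=1..n. 1 / (k0 + real n * real k + real i)) + \<epsilon> / (real k)^2) * \<xi> k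
        + b (Suc k)" for k
      using first step[of k] by (cases "k = 0") (simp_all add: b_def N_def add.commute)
  qed (use k0_pos \<alpha>_pos \<epsilon>_pos \<xi>_pos A1_pos A2_pos in \<open>auto simp: b_def N_def intro: less_imp_le\<close>)
  also have "(\<Sum>m=1..K. (N m + 1) powr \<alpha> * b m) = (k0 + real n + 1) powr \<alpha> * A1 + A2 * T"
    using K unfolding T_def sum_distrib_left
    by (simp add: sum.atLeast_Suc_atMost b_def N_def mult_ac numeral_2_eq_2)
  also have "c * ((k0 + 1) powr \<alpha> * \<xi> 0 + ((k0 + real n + 1) powr \<alpha> * A1 + A2 * T)) / (N K + 1) powr \<alpha>
      \<le> c * ((k0 + 1) powr \<alpha> * \<xi> 0 + ((k0 + real n + 1) powr \<alpha> * A1 + A2 * B)) / N K powr \<alpha>"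
    using T_le N_pos[of K] \<xi>_pos[of 0] A1_pos A2_pos \<alpha>_pos \<alpha>\<beta> n_pos
    by (intro frac_le mult_left_mono add_left_mono add_nonneg_nonneg mult_nonneg_nonneg powr_mono2)
      (auto simp: c_def B_def E_def)
  also have "\<dots> = c * (k0 + 1) powr \<alpha> / N K powr \<alpha> * \<xi> 0
      + c * (k0 + real n + 1) powr \<alpha> * A1 / N K powr \<alpha>
      + (c / (\<alpha> - \<beta>) * E * A2) / (real n * N K powr \<beta>)
      + c * E * A2 / N K powr (\<beta> + 1)"
  proof -
    have powr_diff_\<beta>: "N K powr (\<alpha> - \<beta>) = N K powr \<alpha> / N K powr \<beta>"
      "N K powr (\<alpha> - \<beta> - 1) = N K powr \<alpha> / N K powr (\<beta> + 1)"
      by (simp_all add: powr_diff[symmetric] algebra_simps)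
    show ?thesis
      using N_pos[of K] \<alpha>\<beta> n_pos unfolding B_def powr_diff_\<beta> by (simp add: field_simps)
  qed
  finally show ?thesis unfolding Let_def c_def N_def E_def .
qed

end
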